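(* Fix an even integer $m$ and an integer $r\ge 0$ with $m-2r\ge0$, and put $\ell_n=\frac{n-m}2+r$ for even $n$. For $y\in\mathbb C$ let $$Q_{n(+)}(y)=Q_{n(+)}(y|A_1,\dots,A_{\ell_n}|B_1,\dots,B_n)=\frac{\prod_{a=r+1}^{\ell_n}(1-A_a^2e^{2y})}{\prod_{j=1}^n(1-B_je^y)}.$$ Consider a family of polynomials $P_n(A_1,\dots,A_{\ell_n}|B_1,\dots,B_n)$ in the $A_a$ whose coefficients are symmetric Laurent polynomials in the $B_j$, and suppose there exist polynomials $\tilde P_n=\tilde P_n(A_1,\dots,A_{\ell_n}|B_1,\dots,B_{n-2}|B)$ and $\overline P_n=\overline P_n(A_1,\dots,A_{\ell_n}|B_1,\dots,B_{n-2}|B)$ in the $A_a$ and constants $d_n$ such that (1) $P_n(A_1,\dots,A_{\ell_n}|B_1,\dots,B_{n-2},B,-B)=\prod_{a=1}^r(1-A_a^2B^{-2})\,\tilde P_n$; (2) $\mathrm{Asym}\{\tilde P_n\}=\mathrm{Asym}\{\prod_{a=r+1}^{\ell_n-1}(1-A_a^2B^{-2})\,\overline P_n\}$; (3) $\overline P_n(A_1,\dots,A_{\ell_n-1},\pm B|B_1,\dots,B_{n-2}|B)=\pm B^{n-1}d_nP_{n-2}(A_1,\dots,A_{\ell_n-1}|B_1,\dots,B_{n-2})$, where Asym denotes antisymmetrization with respect to $A_{r+1},\dots,A_{\ell_n}$. Then $P^{new}_n=P_nQ_{n(+)}(y)$ is symmetric in the $B_j$ and satisfies (1), (2), (3) (with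 $P_n,P_{n-2}$ replaced by $P^{new}_n,P^{new}_{n-2}$) for appropriate $\tilde P^{new}_n$ and $\overline P^{new}_n$.
   Context: Antisymmetrization of a function $f$ of variables $A_{r+1},\dots,A_{\ell_n}$ means $\sum_{\sigma}\mathrm{sgn}(\sigma)\,f(A_{\sigma(r+1)},\dots,A_{\sigma(\ell_n)})$ over permutations $\sigma$ of $\{r+1,\dots,\ell_n\}$. *)

theory Defs
  imports Complex_Main "HOL-Combinatorics.Permutations"
begin

text \<open>Variables A_1, A_2, ... and B_1, B_2, ... are modelled as functions nat => complex;
  only the indicated coordinates are used.\<close>

definition ell :: "nat \<Rightarrow> nat \<Rightarrow> nat \<Rightarrow> nat" where
  "ell m r n = (n - m) div 2 + r"

definition poly_in_A :: "nat \<Rightarrow> ((nat \<Rightarrow> complex) \<Rightarrow> 'b \<Rightarrow> complex) \<Rightarrow> bool" where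
  "poly_in_A k f \<longleftrightarrow> (\<exists>S c. finite (S :: (nat \<Rightarrow> nat) set) \<and>
     (\<forall>A x. f A x = (\<Sum>\<alpha>\<in>S. c \<alpha> x * (\<Prod>a\<in>{1..k}. A a ^ \<alpha> a))))"

definition laurent_in :: "nat \<Rightarrow> ((nat \<Rightarrow> complex) \<Rightarrow> complex) \<Rightarrow> bool" where
  "laurent_in n g \<longleftrightarrow> (\<exists>T d. finite (T :: (nat \<Rightarrow> int) set) \<and>
     (\<forall>B. (\<forall>j\<in>{1..n}. B j \<noteq> 0) \<longrightarrow>
        g B = (\<Sum>\<beta>\<in>T. d \<beta> * (\<Prod>j\<in>{1..n}. B j powi \<beta> j))))"

definition symmetric_in :: "nat \<Rightarrow> ((nat \<Rightarrow> complex) \<Rightarrow> 'c) \<Rightarrow> bool" where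
  "symmetric_in n g \<longleftrightarrow> (\<forall>\<sigma> B. \<sigma> permutes {1..n} \<longrightarrow> g (B \<circ> \<sigma>) = g B)"

definition sym_laurent_poly :: "nat \<Rightarrow> nat \<Rightarrow> ((nat \<Rightarrow> complex) \<Rightarrow> (nat \<Rightarrow> complex) \<Rightarrow> complex) \<Rightarrow> bool" where
  "sym_laurent_poly k n P \<longleftrightarrow> (\<exists>S c. finite (S :: (nat \<Rightarrow> nat) set) \<and>
     (\<forall>\<alpha>\<in>S. laurent_in n (c \<alpha>) \<and> symmetric_in n (c \<alpha>)) \<and>
     (\<forall>A B. P A B = (\<Sum>\<alpha>\<in>S. c \<alpha> B * (\<Prod>a\<in>{1..k}. A a ^ \<alpha> a))))"

definition Asym :: "nat \<Rightarrow> nat \<Rightarrow> ((nat \<Rightarrow> complex) \<Rightarrow> complex) \<Rightarrow> (nat \<Rightarrow> complex) \<Rightarrow> complex" where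
  "Asym r l f A = (\<Sum>\<sigma>\<in>{\<sigma>. \<sigma> permutes {r+1..l}}. of_int (sign \<sigma>) * f (A \<circ> \<sigma>))"

definition Qplus :: "nat \<Rightarrow> nat \<Rightarrow> complex \<Rightarrow> nat \<Rightarrow> (nat \<Rightarrow> complex) \<Rightarrow> (nat \<Rightarrow> complex) \<Rightarrow> complex" where
  "Qplus m r y n A B =
     (\<Prod>a\<in>{r+1..ell m r n}. 1 - A a ^ 2 * exp (2 * y)) / (\<Prod>j\<in>{1..n}. 1 - B j * exp y)"

end

theory Submission
  imports Defs
begin

text \<open>Q_{n(+)} is symmetric in the B_j, so P_n Q_{n(+)} stays symmetric, and its numerator is
  symmetric in A_{r+1}, ..., A_{l_n}, so it passes through the antisymmetrisation. Hence the new
  tilde-P_n and bar-P_n are the old ones times Q_{n(+)} specialised at B_{n-1} = B, B_n = -B. This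
  specialisation puts (1 - B e^y)(1 + B e^y) = 1 - B^2 e^{2y} into the denominator, which cancels
  the numerator factor a = l_n once A_{l_n} = +-B; as l_{n-2} = l_n - 1, what remains is
  Q_{n-2(+)}.\<close>

lemma poly_in_A_const: "poly_in_A k (\<lambda>A x. c x)"
  unfolding poly_in_A_def
  by (rule exI[of _ "{\<lambda>_. 0}"], rule exI[of _ "\<lambda>_ x. c x"]) simp

lemma poly_in_A_var:
  assumes "a \<in> {1..k}"
  shows "poly_in_A k (\<lambda>A x. A a)"
  unfolding poly_in_A_def
proof (rule exI[of _ "{\<lambda>i. if i = a then 1 else 0}"], rule exI[of _ "\<lambda>_ _. 1"], intro conjI allI)
  fix A :: "nat \<Rightarrow> complex" and x :: 'b
  have "(\<Prod>i\<in>{1..k}. A i ^ (if i = a then 1 else 0)) = (\<Prod>i\<in>{1..k}. if i = a then A a else 1)"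
    by (rule prod.cong) auto
  with assms show "A a = (\<Sum>\<alpha>\<in>{\<lambda>i. if i = a then 1 else 0}. 1 * (\<Prod>i\<in>{1..k}. A i ^ \<alpha> i))"
    by simp
qed simp

lemma poly_in_A_add:
  assumes "poly_in_A k f" "poly_in_A k g"
  shows "poly_in_A k (\<lambda>A x. f A x + g A x)"
proof -
  obtain S c where S: "finite S" "\<And>A x. f A x = (\<Sum>\<alpha>\<in>S. c \<alpha> x * (\<Prod>a\<in>{1..k}. A a ^ \<alpha> a))"
    using assms(1) unfolding poly_in_A_def by blast
  obtain T e where T: "finite T" "\<And>A x. g A x = (\<Sum>\<alpha>\<in>T. e \<alpha> x * (\<Prod>a\<in>{1..k}. A a ^ \<alpha> a))"
    using assms(2) unfolding poly_in_A_def by blast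
  define c' where "c' \<alpha> x = (if \<alpha> \<in> S then c \<alpha> x else 0)" for \<alpha> x
  define e' where "e' \<alpha> x = (if \<alpha> \<in> T then e \<alpha> x else 0)" for \<alpha> x
  have U: "finite (S \<union> T)" using S T by simp
  have "f A x + g A x = (\<Sum>\<alpha>\<in>S \<union> T. (c' \<alpha> x + e' \<alpha> x) * (\<Prod>a\<in>{1..k}. A a ^ \<alpha> a))" for A x
  proof -
    have "f A x = (\<Sum>\<alpha>\<in>S \<union> T. c' \<alpha> x * (\<Prod>a\<in>{1..k}. A a ^ \<alpha> a))"
      unfolding S(2) by (rule sum.mono_neutral_cong_left[OF U]) (auto simp: c'_def)
    moreover have "g A x = (\<Sum>\<alpha>\<in>S \<union> T. e' \<alpha> x * (\<Prod>a\<in>{1..k}. A a ^ \<alpha> a))"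
      unfolding T(2) by (rule sum.mono_neutral_cong_left[OF U]) (auto simp: e'_def)
    ultimately show ?thesis by (simp add: distrib_right sum.distrib)
  qed
  with U show ?thesis
    unfolding poly_in_A_def by (intro exI[of _ "S \<union> T"] exI[of _ "\<lambda>\<alpha> x. c' \<alpha> x + e' \<alpha> x"]) simp
qed

lemma poly_in_A_mult:
  assumes "poly_in_A k f" "poly_in_A k g"
  shows "poly_in_A k (\<lambda>A x. f A x * g A x)"
proof -
  obtain S c where S: "finite S" "\<And>A x. f A x = (\<Sum>\<alpha>\<in>S. c \<alpha> x * (\<Prod>a\<in>{1..k}. A a ^ \<alpha> a))"
    using assms(1) unfolding poly_in_A_def by blast
  obtain T e where T: "finite T" "\<And>A x. g A x = (\<Sum>\<alpha>\<in>T. e \<alpha> x * (\<Prod>a\<in>{1..k}. A a ^ \<alpha> a))"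
    using assms(2) unfolding poly_in_A_def by blast
  define h where "h p i = fst p i + snd p i" for p :: "(nat \<Rightarrow> nat) \<times> (nat \<Rightarrow> nat)" and i
  define ce where "ce \<gamma> x = (\<Sum>p\<in>{p \<in> S \<times> T. h p = \<gamma>}. c (fst p) x * e (snd p) x)" for \<gamma> x
  have ST: "finite (S \<times> T)" using S T by simp
  have "f A x * g A x = (\<Sum>\<gamma>\<in>h ` (S \<times> T). ce \<gamma> x * (\<Prod>a\<in>{1..k}. A a ^ \<gamma> a))" for A x
  proof -
    define M where "M \<alpha> = (\<Prod>a\<in>{1..k}. A a ^ \<alpha> a)" for \<alpha>
    have M: "M (h p) = M (fst p) * M (snd p)" for p
      unfolding M_def h_def by (simp add: power_add prod.distrib)
    have "f A x * g A x = (\<Sum>p\<in>S \<times> T. c (fst p) x * e (snd p) x * M (h p))"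
      unfolding S(2) T(2) sum_product sum.cartesian_product M
      by (rule sum.cong) (auto simp: mult_ac M_def)
    also have "\<dots> = (\<Sum>\<gamma>\<in>h ` (S \<times> T). \<Sum>p\<in>{p \<in> S \<times> T. h p = \<gamma>}. c (fst p) x * e (snd p) x * M (h p))"
      by (rule sum.image_gen[OF ST])
    also have "\<dots> = (\<Sum>\<gamma>\<in>h ` (S \<times> T). ce \<gamma> x * M \<gamma>)"
      unfolding ce_def by (rule sum.cong) (auto simp: sum_distrib_right)
    finally show ?thesis unfolding M_def .
  qed
  with ST show ?thesis
    unfolding poly_in_A_def by (intro exI[of _ "h ` (S \<times> T)"] exI[of _ ce]) simp
qed

lemma poly_in_A_prod:
  assumes "finite I" "\<And>i. i \<in> I \<Longrightarrow> poly_in_A k (f i)"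
  shows "poly_in_A k (\<lambda>A x. \<Prod>i\<in>I. f i A x)"
  using assms
proof (induction I rule: finite_induct)
  case empty
  then show ?case using poly_in_A_const[of k "\<lambda>_. 1"] by simp
next
  case (insert i I)
  then show ?case using poly_in_A_mult[of k "f i" "\<lambda>A x. \<Prod>i\<in>I. f i A x"] by simp
qed

lemma poly_in_A_Qplus: "poly_in_A (ell m r n) (\<lambda>A x. Qplus m r y n A (g x))"
proof -
  have "poly_in_A (ell m r n) (\<lambda>A x. 1 + A a * A a * - exp (2 * y))" if "a \<in> {r+1..ell m r n}" for a
    using that by (intro poly_in_A_add poly_in_A_mult poly_in_A_const poly_in_A_var) auto
  then have "poly_in_A (ell m r n) (\<lambda>A x. (\<Prod>a\<in>{r+1..ell m r n}. 1 + A a * A a * - exp (2 * y)) *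
      (1 / (\<Prod>j\<in>{1..n}. 1 - g x j * exp y)))"
    by (intro poly_in_A_mult poly_in_A_prod poly_in_A_const) auto
  then show ?thesis
    unfolding Qplus_def by (simp add: power2_eq_square)
qed

lemma poly_in_A_mult_Qplus:
  assumes "poly_in_A (ell m r n) (\<lambda>A (Bs, B). F A Bs B)"
  shows "poly_in_A (ell m r n) (\<lambda>A (Bs, B). F A Bs B * Qplus m r y n A (G Bs B))"
  using poly_in_A_mult[OF assms poly_in_A_Qplus[where g = "\<lambda>(Bs, B). G Bs B"]]
  by (simp add: split_def)

lemma sym_laurent_poly_permute:
  assumes "sym_laurent_poly k n P" "\<sigma> permutes {1..n}"
  shows "P A (B \<circ> \<sigma>) = P A B"
proof -
  obtain S c where "\<forall>\<alpha>\<in>S. symmetric_in n (c \<alpha>)"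
    and P: "\<And>A B. P A B = (\<Sum>\<alpha>\<in>S. c \<alpha> B * (\<Prod>a\<in>{1..k}. A a ^ \<alpha> a))"
    using assms(1) unfolding sym_laurent_poly_def by blast
  with assms(2) show ?thesis
    unfolding P by (intro sum.cong) (auto simp: symmetric_in_def)
qed

lemma Qplus_permute_B:
  assumes "\<sigma> permutes {1..n}"
  shows "Qplus m r y n A (B \<circ> \<sigma>) = Qplus m r y n A B"
  using prod.permute[OF assms, of "\<lambda>j. 1 - B j * exp y"] by (simp add: Qplus_def o_def)

lemma Qplus_permute_A:
  assumes "\<sigma> permutes {r+1..ell m r n}"
  shows "Qplus m r y n (A \<circ> \<sigma>) B = Qplus m r y n A B"
  using prod.permute[OF assms, of "\<lambda>a. 1 - A a ^ 2 * exp (2 * y)"] by (simp add: Qplus_def o_def)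

lemma Asym_mult_invariant:
  assumes "\<And>\<sigma>. \<sigma> permutes {r+1..l} \<Longrightarrow> s (A \<circ> \<sigma>) = s A"
  shows "Asym r l (\<lambda>A'. f A' * s A') A = Asym r l f A * s A"
  unfolding Asym_def sum_distrib_right by (rule sum.cong) (auto simp: assms)

lemma Asym_mult_Qplus:
  "Asym r (ell m r n) (\<lambda>A'. f A' * Qplus m r y n A' B) A = Asym r (ell m r n) f A * Qplus m r y n A B"
  by (rule Asym_mult_invariant) (rule Qplus_permute_A)

lemma ell_minus_2:
  assumes "m + 2 \<le> n"
  shows "ell m r (n - 2) = ell m r n - 1" and "r < ell m r n"
  using assms unfolding ell_def by (auto simp: div_if)

lemma prod_one_minus_upd_pm_pair:
  fixes z :: "'a :: comm_ring_1" and n :: nat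
  assumes "2 \<le> n"
  shows "(\<Prod>j\<in>{1..n}. 1 - (Bs(n-1 := B, n := -B)) j * z) = (\<Prod>j\<in>{1..n-2}. 1 - Bs j * z) * (1 - B\<^sup>2 * z\<^sup>2)"
proof -
  obtain k where n: "n = Suc (Suc k)" using assms by (metis add_2_eq_Suc le_Suc_ex)
  have "(\<Prod>j\<in>{1..k}. 1 - (Bs(Suc k := B, Suc (Suc k) := -B)) j * z) = (\<Prod>j\<in>{1..k}. 1 - Bs j * z)"
    by (rule prod.cong) auto
  then show ?thesis
    unfolding n by (simp add: algebra_simps power2_eq_square)
qed

lemma prod_one_minus_sq_upd_last:
  fixes w :: "'a :: comm_ring_1" and l :: nat
  assumes "r \<le> l" "b\<^sup>2 = B\<^sup>2"
  shows "(\<Prod>a\<in>{r+1..Suc l}. 1 - (A(Suc l := b)) a ^ 2 * w) = (\<Prod>a\<in>{r+1..l}. 1 - A a ^ 2 * w) * (1 - B\<^sup>2 * w)"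
proof -
  have "(\<Prod>a\<in>{r+1..l}. 1 - (A(Suc l := b)) a ^ 2 * w) = (\<Prod>a\<in>{r+1..l}. 1 - A a ^ 2 * w)"
    by (rule prod.cong) auto
  with assms show ?thesis by (simp add: mult.commute)
qed

lemma Qplus_specialize:
  assumes "m + 2 \<le> n" "b\<^sup>2 = B\<^sup>2" "1 - B\<^sup>2 * exp (2 * y) \<noteq> 0"
  shows "Qplus m r y n (A(ell m r n := b)) (Bs(n-1 := B, n := -B)) = Qplus m r y (n - 2) A Bs"
proof -
  define l where "l = ell m r (n - 2)"
  have l: "ell m r n = Suc l" "r \<le> l"
    using ell_minus_2[OF assms(1), of r] by (auto simp: l_def)
  have "(exp y)\<^sup>2 = exp (2 * y)"
    by (simp add: exp_double[symmetric] mult.commute)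
  then have den: "(\<Prod>j\<in>{1..n}. 1 - (Bs(n-1 := B, n := -B)) j * exp y) =
      (\<Prod>j\<in>{1..n-2}. 1 - Bs j * exp y) * (1 - B\<^sup>2 * exp (2 * y))"
    using prod_one_minus_upd_pm_pair[of n Bs B "exp y"] assms(1) by simp
  show ?thesis
    unfolding Qplus_def den l(1) prod_one_minus_sq_upd_last[OF l(2) assms(2)]
    using assms(3) by (simp add: l_def)
qed

theorem proposition5:
  fixes m r :: nat and y :: complex
    and P :: "nat \<Rightarrow> (nat \<Rightarrow> complex) \<Rightarrow> (nat \<Rightarrow> complex) \<Rightarrow> complex"
    and tP bP :: "nat \<Rightarrow> (nat \<Rightarrow> complex) \<Rightarrow> (nat \<Rightarrow> complex) \<Rightarrow> complex \<Rightarrow> complex"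
    and d :: "nat \<Rightarrow> complex"
  assumes m_even: "even m" and mr: "2 * r \<le> m"
    and P_poly: "\<And>n. even n \<Longrightarrow> m \<le> n \<Longrightarrow> sym_laurent_poly (ell m r n) n (P n)"
    and tP_poly: "\<And>n. even n \<Longrightarrow> m + 2 \<le> n \<Longrightarrow>
        poly_in_A (ell m r n) (\<lambda>A (Bs, B). tP n A Bs B)"
    and bP_poly: "\<And>n. even n \<Longrightarrow> m + 2 \<le> n \<Longrightarrow>
        poly_in_A (ell m r n) (\<lambda>A (Bs, B). bP n A Bs B)"
    and cond1: "\<And>n A Bs B. even n \<Longrightarrow> m + 2 \<le> n \<Longrightarrow>
        (\<forall>j\<in>{1..n-2}. Bs j \<noteq> 0) \<Longrightarrow> B \<noteq> 0 \<Longrightarrow>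
        P n A (Bs(n-1 := B, n := -B)) = (\<Prod>a\<in>{1..r}. 1 - A a ^ 2 / B ^ 2) * tP n A Bs B"
    and cond2: "\<And>n A Bs B. even n \<Longrightarrow> m + 2 \<le> n \<Longrightarrow>
        (\<forall>j\<in>{1..n-2}. Bs j \<noteq> 0) \<Longrightarrow> B \<noteq> 0 \<Longrightarrow>
        Asym r (ell m r n) (\<lambda>A'. tP n A' Bs B) A =
        Asym r (ell m r n) (\<lambda>A'. (\<Prod>a\<in>{r+1..ell m r n - 1}. 1 - A' a ^ 2 / B ^ 2) * bP n A' Bs B) A"
    and cond3p: "\<And>n A Bs B. even n \<Longrightarrow> m + 2 \<le> n \<Longrightarrow>
        (\<forall>j\<in>{1..n-2}. Bs j \<noteq> 0) \<Longrightarrow> B \<noteq> 0 \<Longrightarrow>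
        bP n (A(ell m r n := B)) Bs B = B ^ (n - 1) * d n * P (n - 2) A Bs"
    and cond3m: "\<And>n A Bs B. even n \<Longrightarrow> m + 2 \<le> n \<Longrightarrow>
        (\<forall>j\<in>{1..n-2}. Bs j \<noteq> 0) \<Longrightarrow> B \<noteq> 0 \<Longrightarrow>
        bP n (A(ell m r n := -B)) Bs B = - (B ^ (n - 1) * d n * P (n - 2) A Bs)"
  defines "Pnew \<equiv> (\<lambda>n A B. P n A B * Qplus m r y n A B)"
  shows
    "(\<forall>n. even n \<and> m \<le> n \<longrightarrow>
        (\<forall>\<sigma> A B. \<sigma> permutes {1..n} \<longrightarrow>
           (\<forall>j\<in>{1..n}. B j \<noteq> 0 \<and> 1 - B j * exp y \<noteq> 0) \<longrightarrow>
           Pnew n A (B \<circ> \<sigma>) = Pnew n A B))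
     \<and> (\<exists>tPn bPn :: nat \<Rightarrow> (nat \<Rightarrow> complex) \<Rightarrow> (nat \<Rightarrow> complex) \<Rightarrow> complex \<Rightarrow> complex.
        \<forall>n. even n \<and> m + 2 \<le> n \<longrightarrow>
          poly_in_A (ell m r n) (\<lambda>A (Bs, B). tPn n A Bs B) \<and>
          poly_in_A (ell m r n) (\<lambda>A (Bs, B). bPn n A Bs B) \<and>
          (\<forall>A Bs B. (\<forall>j\<in>{1..n-2}. Bs j \<noteq> 0 \<and> 1 - Bs j * exp y \<noteq> 0) \<longrightarrow>
             B \<noteq> 0 \<longrightarrow> 1 - B ^ 2 * exp (2 * y) \<noteq> 0 \<longrightarrow>
             Pnew n A (Bs(n-1 := B, n := -B)) = (\<Prod>a\<in>{1..r}. 1 - A a ^ 2 / B ^ 2) * tPn n A Bs B \<and>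
             Asym r (ell m r n) (\<lambda>A'. tPn n A' Bs B) A =
               Asym r (ell m r n) (\<lambda>A'. (\<Prod>a\<in>{r+1..ell m r n - 1}. 1 - A' a ^ 2 / B ^ 2) * bPn n A' Bs B) A \<and>
             bPn n (A(ell m r n := B)) Bs B = B ^ (n - 1) * d n * Pnew (n - 2) A Bs \<and>
             bPn n (A(ell m r n := -B)) Bs B = - (B ^ (n - 1) * d n * Pnew (n - 2) A Bs)))"
proof -
  define Qs where "Qs n A Bs B = Qplus m r y n A (Bs(n-1 := B, n := -B))" for n A Bs B
  define tPn where "tPn n A Bs B = tP n A Bs B * Qs n A Bs B" for n A Bs B
  define bPn where "bPn n A Bs B = bP n A Bs B * Qs n A Bs B" for n A Bs B
  have "Pnew n A (B \<circ> \<sigma>) = Pnew n A B" if "even n" "m \<le> n" "\<sigma> permutes {1..n}" for n \<sigma> A B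
    using sym_laurent_poly_permute[OF P_poly[OF that(1,2)] that(3)] Qplus_permute_B[OF that(3)]
    by (simp add: Pnew_def)
  moreover have "poly_in_A (ell m r n) (\<lambda>A (Bs, B). tPn n A Bs B)"
      and "poly_in_A (ell m r n) (\<lambda>A (Bs, B). bPn n A Bs B)" if "even n" "m + 2 \<le> n" for n
    unfolding tPn_def bPn_def Qs_def
    by (intro poly_in_A_mult_Qplus tP_poly bP_poly that)+
  moreover have "Asym r (ell m r n) (\<lambda>A'. tPn n A' Bs B) A =
      Asym r (ell m r n) (\<lambda>A'. (\<Prod>a\<in>{r+1..ell m r n - 1}. 1 - A' a ^ 2 / B ^ 2) * bPn n A' Bs B) A"
    if "even n" "m + 2 \<le> n" "\<forall>j\<in>{1..n-2}. Bs j \<noteq> 0" "B \<noteq> 0" for n A Bs B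
    using cond2[OF that] by (simp add: tPn_def bPn_def Qs_def Asym_mult_Qplus mult.assoc[symmetric])
  moreover have "Qs n (A(ell m r n := B)) Bs B = Qplus m r y (n - 2) A Bs"
      and "Qs n (A(ell m r n := -B)) Bs B = Qplus m r y (n - 2) A Bs"
    if "m + 2 \<le> n" "1 - B\<^sup>2 * exp (2 * y) \<noteq> 0" for n A Bs B
    unfolding Qs_def by (rule Qplus_specialize[OF that(1) _ that(2)], simp)+
  ultimately show ?thesis
    using cond1 cond3p cond3m
    by (intro conjI allI impI exI[of _ tPn] exI[of _ bPn]) (auto simp: Pnew_def tPn_def bPn_def Qs_def)
qed

end
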